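(* Let $N\geq 1$ and let $X=(X_1,\dots,X_N)$ be a random vector in $\{-1,1\}^N$ with unit covariance $\rho=\rho^X$, $\rho_{i,j}=\mathbf{E}[X_iX_j]$. (i) The matrix $\rho$ is singular if and only if there exist real deterministic coefficients $\lambda_1,\dots,\lambda_N$, not all zero, such that $\sum_k\lambda_kX_k=0$ almost surely. (ii) If $\rho$ is singular, then $\pi(\rho)$ lies on the boundary of $\mathcal{U}_N^*$ in $\mathscr{F}_N^*$.
   Context: $\mathcal{U}_N$ is the set of all matrices $\rho^X$ for random vectors $X\in\{-1,1\}^N$ (unit covariances). $\mathscr{F}_N^*$ is the space of real arrays indexed by pairs $1\le i<j\le N$, $\pi(\rho)=(\rho_{i,j})_{i<j}$, and $\mathcal{U}_N^*=\pi(\mathcal{U}_N)$. *)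

theory Defs
  imports "HOL-Probability.Probability" "Jordan_Normal_Form.Determinant"
begin

text \<open>Indices are 0-based: coordinates 0..N-1 play the role of 1..N in the paper.\<close>

definition rho :: "'a measure \<Rightarrow> ('a \<Rightarrow> nat \<Rightarrow> real) \<Rightarrow> nat \<Rightarrow> nat \<Rightarrow> nat \<Rightarrow> real" where
  "rho M X N i j = (if i < N \<and> j < N then integral\<^sup>L M (\<lambda>\<omega>. X \<omega> i * X \<omega> j) else 0)"

definition pm1_vec :: "nat \<Rightarrow> (nat \<Rightarrow> real) \<Rightarrow> bool" where
  "pm1_vec N x \<longleftrightarrow> (\<forall>i<N. x i \<in> {-1, 1})"

text \<open>Every such
  random vector has a law which is a discrete distribution on {-1,1}^N, so it suffices
  to range over pmfs with the identity random vector.\<close>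
definition U :: "nat \<Rightarrow> (nat \<Rightarrow> nat \<Rightarrow> real) set" where
  "U N = {rho (measure_pmf p) (\<lambda>x. x) N | p. \<forall>x\<in>set_pmf p. pm1_vec N x}"

text \<open>The space F_N^* of real arrays indexed by pairs i<j (<N), as functions on
  nat \<times> nat vanishing outside those pairs (with the product topology).\<close>
definition F_star :: "nat \<Rightarrow> (nat \<times> nat \<Rightarrow> real) set" where
  "F_star N = {f. \<forall>i j. \<not> (i < j \<and> j < N) \<longrightarrow> f (i, j) = 0}"

definition pi_proj :: "nat \<Rightarrow> (nat \<Rightarrow> nat \<Rightarrow> real) \<Rightarrow> (nat \<times> nat \<Rightarrow> real)" where
  "pi_proj N r = (\<lambda>(i, j). if i < j \<and> j < N then r i j else 0)"

definition U_star :: "nat \<Rightarrow> (nat \<times> nat \<Rightarrow> real) set" where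
  "U_star N = pi_proj N ` U N"

end

theory Submission
  imports Defs
begin

text \<open>
  The quadratic form of \<open>\<rho>\<close> is a second moment: \<open>l\<^sup>T \<rho> l = E[(\<Sum>\<^sub>k l\<^sub>k X\<^sub>k)\<^sup>2]\<close>.
  Hence \<open>\<rho> l = 0\<close> exactly when \<open>\<Sum>\<^sub>k l\<^sub>k X\<^sub>k = 0\<close> almost surely, which is (i), and every
  element of \<open>U\<^sub>N\<close> is positive semidefinite with unit diagonal.
  For (ii), \<open>\<rho> \<in> U\<^sub>N\<close> since the law of \<open>X\<close> is a distribution on \<open>{-1,1}\<^sup>N\<close>. If \<open>\<rho> l = 0\<close>
  with \<open>l \<noteq> 0\<close>, the unit diagonal forces two nonzero entries of \<open>l\<close>. Lowering each off-diagonal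
  entry \<open>\<rho>\<^sub>i\<^sub>j\<close> by \<open>t l\<^sub>i l\<^sub>j\<close> gives a symmetric unit-diagonal matrix whose quadratic form
  at \<open>l\<close> is \<open>-t \<Sum>\<^sub>i\<^sub>\<noteq>\<^sub>j l\<^sub>i\<^sup>2 l\<^sub>j\<^sup>2 < 0\<close>, so the path \<open>t \<mapsto> \<pi>(\<rho>) - t \<pi>(l l\<^sup>T)\<close> leaves
  \<open>U\<^sub>N\<^sup>*\<close> for every \<open>t > 0\<close>.
\<close>

lemma integrable_mult_linear_combination:
  fixes X :: "'a \<Rightarrow> nat \<Rightarrow> real"
  assumes "\<And>i j. i < N \<Longrightarrow> j < N \<Longrightarrow> integrable M (\<lambda>\<omega>. X \<omega> i * X \<omega> j)" and "i < N"
  shows "integrable M (\<lambda>\<omega>. X \<omega> i * (\<Sum>j<N. l j * X \<omega> j))"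
  unfolding sum_distrib_left mult.left_commute[of "X _ i"]
  using assms by (intro Bochner_Integration.integrable_sum integrable_mult_right) auto

lemma rho_mult_eq_integral:
  fixes X :: "'a \<Rightarrow> nat \<Rightarrow> real"
  assumes "\<And>i j. i < N \<Longrightarrow> j < N \<Longrightarrow> integrable M (\<lambda>\<omega>. X \<omega> i * X \<omega> j)" and "i < N"
  shows "(\<Sum>j<N. rho M X N i j * l j) = (\<integral>\<omega>. X \<omega> i * (\<Sum>j<N. l j * X \<omega> j) \<partial>M)"
proof -
  have "(\<integral>\<omega>. X \<omega> i * (\<Sum>j<N. l j * X \<omega> j) \<partial>M) = (\<integral>\<omega>. (\<Sum>j<N. l j * (X \<omega> i * X \<omega> j)) \<partial>M)"
    by (simp add: sum_distrib_left mult.left_commute)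
  also have "\<dots> = (\<Sum>j<N. l j * (\<integral>\<omega>. X \<omega> i * X \<omega> j \<partial>M))"
    using assms by simp
  finally show ?thesis
    using \<open>i < N\<close> by (simp add: rho_def mult.commute)
qed

lemma integrable_linear_combination_square:
  fixes X :: "'a \<Rightarrow> nat \<Rightarrow> real"
  assumes "\<And>i j. i < N \<Longrightarrow> j < N \<Longrightarrow> integrable M (\<lambda>\<omega>. X \<omega> i * X \<omega> j)"
  shows "integrable M (\<lambda>\<omega>. (\<Sum>j<N. l j * X \<omega> j)\<^sup>2)"
  unfolding power2_eq_square sum_distrib_right mult.assoc
  using integrable_mult_linear_combination[OF assms]
  by (intro Bochner_Integration.integrable_sum integrable_mult_right) auto

lemma rho_quadratic_form:
  fixes X :: "'a \<Rightarrow> nat \<Rightarrow> real"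
  assumes "\<And>i j. i < N \<Longrightarrow> j < N \<Longrightarrow> integrable M (\<lambda>\<omega>. X \<omega> i * X \<omega> j)"
  shows "(\<Sum>i<N. l i * (\<Sum>j<N. rho M X N i j * l j)) = (\<integral>\<omega>. (\<Sum>j<N. l j * X \<omega> j)\<^sup>2 \<partial>M)"
proof -
  have "(\<integral>\<omega>. (\<Sum>j<N. l j * X \<omega> j)\<^sup>2 \<partial>M)
      = (\<integral>\<omega>. (\<Sum>i<N. l i * (X \<omega> i * (\<Sum>j<N. l j * X \<omega> j))) \<partial>M)"
    by (simp add: power2_eq_square sum_distrib_right mult.assoc)
  also have "\<dots> = (\<Sum>i<N. l i * (\<integral>\<omega>. X \<omega> i * (\<Sum>j<N. l j * X \<omega> j) \<partial>M))"
    by (subst Bochner_Integration.integral_sum)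
      (auto intro: integrable_mult_linear_combination[OF assms])
  finally show ?thesis
    using rho_mult_eq_integral[OF assms] by simp
qed

lemma rho_kernel_iff_AE_zero:
  fixes X :: "'a \<Rightarrow> nat \<Rightarrow> real"
  assumes "\<And>i j. i < N \<Longrightarrow> j < N \<Longrightarrow> integrable M (\<lambda>\<omega>. X \<omega> i * X \<omega> j)"
  shows "(\<forall>i<N. (\<Sum>j<N. rho M X N i j * l j) = 0) \<longleftrightarrow> (AE \<omega> in M. (\<Sum>j<N. l j * X \<omega> j) = 0)"
proof
  assume "\<forall>i<N. (\<Sum>j<N. rho M X N i j * l j) = 0"
  then have "(\<integral>\<omega>. (\<Sum>j<N. l j * X \<omega> j)\<^sup>2 \<partial>M) = 0"
    by (simp add: rho_quadratic_form[OF assms, symmetric])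
  then show "AE \<omega> in M. (\<Sum>j<N. l j * X \<omega> j) = 0"
    by (subst (asm) integral_nonneg_eq_0_iff_AE[OF integrable_linear_combination_square[OF assms]])
      auto
next
  assume "AE \<omega> in M. (\<Sum>j<N. l j * X \<omega> j) = 0"
  then have "(\<integral>\<omega>. X \<omega> i * (\<Sum>j<N. l j * X \<omega> j) \<partial>M) = 0" for i
    by (intro integral_eq_zero_AE) (auto elim: eventually_mono)
  then show "\<forall>i<N. (\<Sum>j<N. rho M X N i j * l j) = 0"
    by (simp add: rho_mult_eq_integral[OF assms])
qed

lemma rho_sym: "rho M X N i j = rho M X N j i"
  by (simp add: rho_def mult.commute conj_commute)

lemma (in finite_measure) integrable_pm1_products:
  fixes X :: "'a \<Rightarrow> nat \<Rightarrow> real"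
  assumes "\<And>i. i < N \<Longrightarrow> (\<lambda>\<omega>. X \<omega> i) \<in> borel_measurable M"
    and "AE \<omega> in M. \<forall>i<N. X \<omega> i \<in> {-1, 1}" and "i < N" "j < N"
  shows "integrable M (\<lambda>\<omega>. X \<omega> i * X \<omega> j)"
  using assms by (intro integrable_const_bound[where B=1])
    (auto elim!: eventually_mono simp: abs_mult intro!: mult_le_one)

lemma (in prob_space) rho_diag_pm1:
  fixes X :: "'a \<Rightarrow> nat \<Rightarrow> real"
  assumes "\<And>i. i < N \<Longrightarrow> (\<lambda>\<omega>. X \<omega> i) \<in> borel_measurable M"
    and "AE \<omega> in M. \<forall>i<N. X \<omega> i \<in> {-1, 1}" and "i < N"
  shows "rho M X N i i = 1"
proof -
  have "(\<integral>\<omega>. X \<omega> i * X \<omega> i \<partial>M) = (\<integral>\<omega>. 1 \<partial>M)"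
    using assms by (intro integral_cong_AE) (auto elim!: eventually_mono)
  then show ?thesis
    using \<open>i < N\<close> by (simp add: rho_def prob_space)
qed

lemma carrier_vec_eq_range_vec: "carrier_vec n = range (vec n)"
  by (auto intro!: image_eqI[where x="vec_index _"] simp: vec_eq_iff)

lemma det_mat_eq_0_iff_kernel:
  fixes f :: "nat \<Rightarrow> nat \<Rightarrow> 'b :: idom"
  shows "det (mat N N (\<lambda>(i, j). f i j)) = 0 \<longleftrightarrow>
           (\<exists>l. (\<exists>k<N. l k \<noteq> 0) \<and> (\<forall>i<N. (\<Sum>j<N. f i j * l j) = 0))"
proof -
  have "det (mat N N (\<lambda>(i, j). f i j)) = 0 \<longleftrightarrow>
          (\<exists>l. vec N l \<noteq> 0\<^sub>v N \<and> mat N N (\<lambda>(i, j). f i j) *\<^sub>v vec N l = 0\<^sub>v N)"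
    by (subst det_0_iff_vec_prod_zero) (auto simp: carrier_vec_eq_range_vec)
  also have "\<dots> \<longleftrightarrow> (\<exists>l. (\<exists>k<N. l k \<noteq> 0) \<and> (\<forall>i<N. (\<Sum>j<N. f i j * l j) = 0))"
    by (simp add: vec_eq_iff scalar_prod_def atLeast0LessThan)
  finally show ?thesis .
qed

lemma (in prob_space) obtain_pmf_distr_countable_support:
  assumes "Y \<in> M \<rightarrow>\<^sub>M count_space UNIV" and "countable S" and "AE \<omega> in M. Y \<omega> \<in> S"
  obtains p where "measure_pmf p = distr M (count_space UNIV) Y" and "set_pmf p \<subseteq> S"
proof -
  let ?D = "distr M (count_space UNIV) Y"
  interpret D: prob_space ?D
    using assms(1) by (rule prob_space_distr)
  have sets_D: "sets ?D = UNIV" by simp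
  have AE_S: "AE x in ?D. x \<in> S"
    using assms by (subst AE_distr_iff) auto
  then have "AE x in ?D. measure ?D {x} \<noteq> 0"
    using assms(2) D.AE_support_countable[OF sets_D] by blast
  then have p: "measure_pmf (Abs_pmf ?D) = ?D"
    using sets_D D.prob_space_axioms by (intro Abs_pmf_inverse) auto
  moreover have "AE x in measure_pmf (Abs_pmf ?D). x \<in> S"
    using AE_S by (simp only: p)
  then have "set_pmf (Abs_pmf ?D) \<subseteq> S"
    by (auto simp: AE_measure_pmf_iff)
  ultimately show ?thesis by (rule that)
qed

lemma measurable_restrict_finite_valued:
  fixes X :: "'a \<Rightarrow> 'i \<Rightarrow> 'b :: t1_space"
  assumes "finite I" and "finite S" and "\<And>i. i \<in> I \<Longrightarrow> (\<lambda>\<omega>. X \<omega> i) \<in> borel_measurable M"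
    and "\<And>\<omega>. \<omega> \<in> space M \<Longrightarrow> restrict (X \<omega>) I \<in> S"
  shows "(\<lambda>\<omega>. restrict (X \<omega>) I) \<in> M \<rightarrow>\<^sub>M count_space UNIV"
proof -
  have "(\<lambda>\<omega>. restrict (X \<omega>) I) -` {a} \<inter> space M \<in> sets M" for a
  proof -
    have "(\<lambda>\<omega>. restrict (X \<omega>) I) -` {a} \<inter> space M
        = {\<omega> \<in> space M. (\<forall>i\<in>I. X \<omega> i = a i) \<and> a \<in> extensional I}"
      by (auto simp: fun_eq_iff extensional_def)
    also have "\<dots> \<in> sets M"
      using assms(1,3) by measurable
    finally show ?thesis .
  qed
  then have "(\<lambda>\<omega>. restrict (X \<omega>) I) \<in> M \<rightarrow>\<^sub>M count_space S"
    using assms(2,4) by (subst measurable_count_space_eq2) auto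
  then show ?thesis
    by (rule measurable_compose) simp
qed

lemma rho_in_U:
  fixes X :: "'a \<Rightarrow> nat \<Rightarrow> real"
  assumes "prob_space M"
    and meas: "\<And>i. i < N \<Longrightarrow> (\<lambda>\<omega>. X \<omega> i) \<in> borel_measurable M"
    and pm1: "\<And>\<omega> i. \<omega> \<in> space M \<Longrightarrow> i < N \<Longrightarrow> X \<omega> i \<in> {-1, 1}"
  shows "rho M X N \<in> U N"
proof -
  interpret prob_space M by fact
  define Y where "Y \<omega> = restrict (X \<omega>) {..<N}" for \<omega>
  let ?S = "PiE {..<N} (\<lambda>_. {-1, 1 :: real})"
  have Y_S: "Y \<omega> \<in> ?S" if "\<omega> \<in> space M" for \<omega>
    using pm1 that by (auto simp: Y_def)
  have Y_meas: "Y \<in> M \<rightarrow>\<^sub>M count_space UNIV"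
    unfolding Y_def using meas Y_S[unfolded Y_def]
    by (intro measurable_restrict_finite_valued[where S="?S"]) (auto simp: finite_PiE)
  have "countable ?S"
    by (simp add: countable_finite finite_PiE)
  moreover have "AE \<omega> in M. Y \<omega> \<in> ?S"
    using Y_S by (rule AE_I2)
  ultimately obtain p where p: "measure_pmf p = distr M (count_space UNIV) Y"
    and supp: "set_pmf p \<subseteq> ?S"
    using obtain_pmf_distr_countable_support[OF Y_meas] by blast
  have "rho (measure_pmf p) (\<lambda>x. x) N = rho M X N"
    using Y_meas by (auto simp: fun_eq_iff rho_def p integral_distr Y_def)
  moreover have "\<forall>x\<in>set_pmf p. pm1_vec N x"
    using supp by (auto simp: pm1_vec_def PiE_iff)
  ultimately show ?thesis
    unfolding U_def by (auto intro!: exI[of _ p])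
qed

lemma in_U_E:
  assumes "r \<in> U N"
  obtains p where "r = rho (measure_pmf p) (\<lambda>x. x) N"
    and "AE x in measure_pmf p. \<forall>i<N. x i \<in> {-1, 1}"
  using assms unfolding U_def pm1_vec_def by (auto simp: AE_measure_pmf_iff)

lemma U_diag: "r \<in> U N \<Longrightarrow> i < N \<Longrightarrow> r i i = 1"
  by (erule in_U_E) (simp add: measure_pmf.rho_diag_pm1)

lemma U_sym: "r \<in> U N \<Longrightarrow> r i j = r j i"
  by (erule in_U_E) (simp add: rho_sym)

lemma U_quadratic_form_nonneg:
  assumes "r \<in> U N"
  shows "0 \<le> (\<Sum>i<N. l i * (\<Sum>j<N. r i j * l j))"
proof -
  obtain p where r: "r = rho (measure_pmf p) (\<lambda>x. x) N"
    and pm1: "AE x in measure_pmf p. \<forall>i<N. x i \<in> {-1, 1}"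
    using assms by (rule in_U_E)
  have "(\<Sum>i<N. l i * (\<Sum>j<N. r i j * l j)) = (\<integral>x. (\<Sum>j<N. l j * x j)\<^sup>2 \<partial>measure_pmf p)"
    unfolding r using pm1 by (intro rho_quadratic_form measure_pmf.integrable_pm1_products) auto
  then show ?thesis
    by simp
qed

lemma kernel_vector_has_two_nonzero_entries:
  fixes r :: "nat \<Rightarrow> nat \<Rightarrow> 'b :: semiring_1"
  assumes "a < N" and "r a a = 1" and "(\<Sum>j<N. r a j * l j) = 0" and "l a \<noteq> 0"
  obtains b where "b < N" and "b \<noteq> a" and "l b \<noteq> 0"
proof (rule ccontr)
  assume "\<not> thesis"
  with that have "\<forall>j \<in> {..<N} - {a}. l j = 0"
    by blast
  then have "(\<Sum>j<N. r a j * l j) = l a"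
    using assms(1,2) by (simp add: sum.remove)
  with assms(3,4) show False
    by simp
qed

lemma sum_off_diagonal_squares_pos:
  fixes l :: "nat \<Rightarrow> 'b :: linordered_idom"
  assumes "a < N" "b < N" "a \<noteq> b" "l a \<noteq> 0" "l b \<noteq> 0"
  shows "0 < (\<Sum>i<N. \<Sum>j<N. if i = j then 0 else (l i * l j)\<^sup>2)"
  using assms by (intro sum_pos2[of _ a] sum_pos2[of _ b] sum_nonneg) auto

lemma pi_proj_eq_imp_eq:
  assumes "pi_proj N r = pi_proj N s"
    and "\<And>i j. r i j = r j i" and "\<And>i j. s i j = s j i" and "\<And>i. i < N \<Longrightarrow> r i i = s i i"
    and "i < N" and "j < N"
  shows "r i j = s i j"
proof (cases i j rule: linorder_cases)
  case less
  then show ?thesis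
    using fun_cong[OF assms(1), of "(i, j)"] assms(6) by (simp add: pi_proj_def)
next
  case greater
  then show ?thesis
    using fun_cong[OF assms(1), of "(j, i)"] assms(2,3,5) by (simp add: pi_proj_def)
qed (use assms(4,5) in simp)

lemma pi_proj_perturbation_notin_U_star:
  fixes \<rho> :: "nat \<Rightarrow> nat \<Rightarrow> real"
  assumes sym: "\<And>i j. \<rho> i j = \<rho> j i" and diag: "\<And>i. i < N \<Longrightarrow> \<rho> i i = 1"
    and ker: "\<And>i. i < N \<Longrightarrow> (\<Sum>j<N. \<rho> i j * l j) = 0"
    and "a < N" and "l a \<noteq> 0" and "t > 0"
  shows "(\<lambda>q. pi_proj N \<rho> q - t * pi_proj N (\<lambda>i j. l i * l j) q) \<notin> U_star N"
proof
  assume "(\<lambda>q. pi_proj N \<rho> q - t * pi_proj N (\<lambda>i j. l i * l j) q) \<in> U_star N"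
  then obtain r where r: "r \<in> U N"
    and r_eq: "pi_proj N r = (\<lambda>q. pi_proj N \<rho> q - t * pi_proj N (\<lambda>i j. l i * l j) q)"
    unfolding U_star_def by auto
  obtain b where b: "b < N" "b \<noteq> a" "l b \<noteq> 0"
    using kernel_vector_has_two_nonzero_entries[of a N \<rho> l] diag ker \<open>a < N\<close> \<open>l a \<noteq> 0\<close>
    by blast
  define s where "s i j = \<rho> i j - t * (if i = j then 0 else l i * l j)" for i j
  have r_s_proj: "pi_proj N r = pi_proj N s"
    unfolding r_eq by (auto simp: pi_proj_def s_def fun_eq_iff)
  have s_sym: "s i j = s j i" for i j
    by (simp add: s_def sym mult.commute)
  have r_s_diag: "r i i = s i i" if "i < N" for i
    using U_diag[OF r that] diag[OF that] by (simp add: s_def)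
  have r_s: "r i j = s i j" if "i < N" "j < N" for i j
    by (rule pi_proj_eq_imp_eq[OF r_s_proj U_sym[OF r] s_sym r_s_diag that])
  have s_term: "l i * (s i j * l j) = l i * (\<rho> i j * l j) - t * (if i = j then 0 else (l i * l j)\<^sup>2)"
    for i j
    by (simp add: s_def power2_eq_square algebra_simps)
  have "(\<Sum>i<N. l i * (\<Sum>j<N. r i j * l j)) = (\<Sum>i<N. \<Sum>j<N. l i * (s i j * l j))"
    using r_s by (simp add: sum_distrib_left)
  also have "\<dots> = (\<Sum>i<N. l i * (\<Sum>j<N. \<rho> i j * l j))
      - t * (\<Sum>i<N. \<Sum>j<N. if i = j then 0 else (l i * l j)\<^sup>2)"
    by (simp only: s_term sum_subtractf sum_distrib_left)
  also have "\<dots> < 0"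
    using ker \<open>t > 0\<close>
      sum_off_diagonal_squares_pos[OF \<open>a < N\<close> b(1) b(2)[symmetric] \<open>l a \<noteq> 0\<close> b(3)]
    by simp
  finally show False
    using U_quadratic_form_nonneg[OF r, of l] by linarith
qed

lemma in_frontier_of_if_path_leaves:
  assumes f: "continuous_map euclideanreal T f" and "f 0 \<in> S"
    and leaves: "\<And>t. t > 0 \<Longrightarrow> f t \<notin> S"
  shows "f 0 \<in> T frontier_of S"
proof -
  have "f 0 \<notin> T interior_of S"
  proof
    assume "f 0 \<in> T interior_of S"
    moreover have "openin euclideanreal {t \<in> topspace euclideanreal. f t \<in> T interior_of S}"
      using f openin_interior_of by (rule openin_continuous_map_preimage)
    then have "open {t. f t \<in> T interior_of S}"
      by (simp only: topspace_euclidean UNIV_I simp_thms open_openin)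
    ultimately obtain e where "e > 0" and "ball 0 e \<subseteq> {t. f t \<in> T interior_of S}"
      using open_contains_ball_eq[of "{t. f t \<in> T interior_of S}" 0] by auto
    moreover have "e / 2 \<in> ball 0 e"
      using \<open>e > 0\<close> by simp
    ultimately have "f (e / 2) \<in> S"
      using interior_of_subset[of T S] by blast
    moreover have "e / 2 > 0"
      using \<open>e > 0\<close> by simp
    ultimately show False
      using leaves by blast
  qed
  moreover have "f 0 \<in> topspace T \<inter> S"
    using continuous_map_image_subset_topspace[OF f] \<open>f 0 \<in> S\<close> by auto
  ultimately show ?thesis
    unfolding frontier_of_def by (intro DiffI subsetD[OF closure_of_subset_Int])
qed

lemma det_rho_eq_0_iff_AE_linear_relation:
  fixes X :: "'a \<Rightarrow> nat \<Rightarrow> real"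
  assumes "\<And>i j. i < N \<Longrightarrow> j < N \<Longrightarrow> integrable M (\<lambda>\<omega>. X \<omega> i * X \<omega> j)"
  shows "det (mat N N (\<lambda>(i, j). rho M X N i j)) = 0 \<longleftrightarrow>
           (\<exists>l. (\<exists>k<N. l k \<noteq> 0) \<and> (AE \<omega> in M. (\<Sum>k<N. l k * X \<omega> k) = 0))"
  by (simp only: det_mat_eq_0_iff_kernel rho_kernel_iff_AE_zero[OF assms])

lemma singular_rho_in_frontier_of_U_star:
  fixes X :: "'a \<Rightarrow> nat \<Rightarrow> real"
  assumes "prob_space M"
    and meas: "\<And>i. i < N \<Longrightarrow> (\<lambda>\<omega>. X \<omega> i) \<in> borel_measurable M"
    and pm1: "\<And>\<omega> i. \<omega> \<in> space M \<Longrightarrow> i < N \<Longrightarrow> X \<omega> i \<in> {-1, 1}"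
    and singular: "det (mat N N (\<lambda>(i, j). rho M X N i j)) = 0"
  shows "pi_proj N (rho M X N) \<in> subtopology euclidean (F_star N) frontier_of U_star N"
proof -
  interpret prob_space M by fact
  obtain l a where ker: "\<And>i. i < N \<Longrightarrow> (\<Sum>j<N. rho M X N i j * l j) = 0"
    and "a < N" and "l a \<noteq> 0"
    using singular det_mat_eq_0_iff_kernel[of N "rho M X N"] by blast
  have diag: "rho M X N i i = 1" if "i < N" for i
    using meas pm1 that by (intro rho_diag_pm1 AE_I2) auto
  define f where "f t = (\<lambda>q. pi_proj N (rho M X N) q - t * pi_proj N (\<lambda>i j. l i * l j) q)" for t
  have "continuous_on UNIV f"
    unfolding f_def by (intro continuous_on_coordinatewise_then_product continuous_intros)
  moreover have "range f \<subseteq> F_star N"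
    by (auto simp: f_def F_star_def pi_proj_def)
  ultimately have "continuous_map euclideanreal (subtopology euclidean (F_star N)) f"
    by (auto simp: continuous_map_in_subtopology)
  moreover have "f 0 \<in> U_star N"
    using rho_in_U[OF assms(1-3)] by (simp add: f_def U_star_def)
  moreover have "f t \<notin> U_star N" if "t > 0" for t
    unfolding f_def using rho_sym diag ker \<open>a < N\<close> \<open>l a \<noteq> 0\<close> that
    by (rule pi_proj_perturbation_notin_U_star)
  ultimately have "f 0 \<in> subtopology euclidean (F_star N) frontier_of U_star N"
    by (rule in_frontier_of_if_path_leaves)
  then show ?thesis
    by (simp add: f_def)
qed

theorem theorem3:
  fixes M :: "'a measure" and X :: "'a \<Rightarrow> nat \<Rightarrow> real" and N :: nat
  assumes "prob_space M"
    and "N \<ge> 1"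
    and "\<And>i. i < N \<Longrightarrow> (\<lambda>\<omega>. X \<omega> i) \<in> borel_measurable M"
    and "\<And>\<omega> i. \<omega> \<in> space M \<Longrightarrow> i < N \<Longrightarrow> X \<omega> i \<in> {-1, 1}"
  shows "(det (mat N N (\<lambda>(i, j). rho M X N i j)) = 0 \<longleftrightarrow>
            (\<exists>l :: nat \<Rightarrow> real. (\<exists>k<N. l k \<noteq> 0) \<and>
               (AE \<omega> in M. (\<Sum>k<N. l k * X \<omega> k) = 0)))
       \<and> (det (mat N N (\<lambda>(i, j). rho M X N i j)) = 0 \<longrightarrow>
            pi_proj N (rho M X N) \<in> (subtopology euclidean (F_star N)) frontier_of (U_star N))"
proof -
  interpret prob_space M by fact
  have products: "integrable M (\<lambda>\<omega>. X \<omega> i * X \<omega> j)" if "i < N" "j < N" for i j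
    using assms(3,4) that by (intro integrable_pm1_products AE_I2) auto
  show ?thesis
    by (intro conjI impI det_rho_eq_0_iff_AE_linear_relation[OF products]
        singular_rho_in_frontier_of_U_star[OF assms(1,3,4)])
qed

end
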